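(* For any $\lambda\in[0,1)$: $\mathbb{L}^{=1}(\mathrm{QBA}|\mathrm{D})\not\subseteq\mathbb{L}^{>\lambda}(\mathrm{QBA}|\mathrm{D})$.
   Context: A quantum automaton is a tuple $\mathcal{A}=(\mathcal{H},|s_0\rangle,\Sigma,\{U_\sigma:\sigma\in\Sigma\},F)$ where $\mathcal{H}$ is a finite-dimensional complex Hilbert space, $|s_0\rangle$ a unit vector, $\Sigma$ a finite alphabet, each $U_\sigma$ unitary, and $F$ a subspace. For $w=\sigma_1\sigma_2\cdots\in\Sigma^\omega$, a unit vector $|\psi\rangle\in F$ and checkpoints $0\le n_1<n_2<\cdots$, the disturbing run is $|s_0\rangle$ (initial state) and for $n\ge1$: $|s_n\rangle=U_{\sigma_n}|\psi\rangle$ if $n-1=n_i$ for some $i$, else $|s_n\rangle=U_{\sigma_n}|s_{n-1}\rangle$. Then $f^{\mathrm{D}}_{\mathcal{A}}(w)=\sup_{|\psi\rangle}\sup_{\{n_i\}}\inf_{i\ge1}|\langle\psi|s_{n_i}\rangle|^2$ over unit $|\psi\rangle\in F$ and strictly increasing checkpoint sequences. $\mathcal{L}^{=1}(\mathcal{A}|\mathrm{D})=\{w\in\Sigma^\omega:f^{\mathrm{D}}_{\mathcal{A}}(w)=1\}$, $\mathcal{L}^{>\lambda}(\mathcal{A}|\mathrm{D})=\{w:f^{\mathrm{D}}_{\mathcal{A}}(w)>\lambda\}$; $\mathbb{L}^{=1}(\mathrm{QBA}|\mathrm{D})$ and $\mathbb{L}^{>\lambda}(\mathrm{QBA}|\mathrm{D})$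 are the classes of all such languages as $\mathcal{A}$ ranges over all quantum automata. *)

theory Defs
  imports Complex_Main "Jordan_Normal_Form.Schur_Decomposition"
begin

text \<open>An automaton is given by (d, s0, Sig, U, F) with U :: nat => complex mat
  (only U sigma for sigma in Sig matter) and F a subspace of C^d.\<close>

definition unit_vec_c :: "nat \<Rightarrow> complex vec \<Rightarrow> bool" where
  "unit_vec_c d v \<longleftrightarrow> v \<in> carrier_vec d \<and> v \<bullet>c v = 1"

definition unitary_c :: "nat \<Rightarrow> complex mat \<Rightarrow> bool" where
  "unitary_c d U \<longleftrightarrow> U \<in> carrier_mat d d \<and> mat_adjoint U * U = 1\<^sub>m d \<and> U * mat_adjoint U = 1\<^sub>m d"

definition subspace_c :: "nat \<Rightarrow> complex vec set \<Rightarrow> bool" where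
  "subspace_c d F \<longleftrightarrow> F \<subseteq> carrier_vec d \<and> 0\<^sub>v d \<in> F \<and>
     (\<forall>x\<in>F. \<forall>y\<in>F. x + y \<in> F) \<and> (\<forall>c. \<forall>x\<in>F. c \<cdot>\<^sub>v x \<in> F)"

definition quantum_automaton ::
  "nat \<Rightarrow> complex vec \<Rightarrow> nat set \<Rightarrow> (nat \<Rightarrow> complex mat) \<Rightarrow> complex vec set \<Rightarrow> bool" where
  "quantum_automaton d s0 Sig U F \<longleftrightarrow>
     unit_vec_c d s0 \<and> finite Sig \<and> Sig \<noteq> {} \<and>
     (\<forall>\<sigma>\<in>Sig. unitary_c d (U \<sigma>)) \<and> subspace_c d F"

text \<open>Infinite words over Sig: w i is the (i+1)-th letter sigma_{i+1}.\<close>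
definition omega_words :: "nat set \<Rightarrow> (nat \<Rightarrow> nat) set" where
  "omega_words Sig = {w. \<forall>i. w i \<in> Sig}"

text \<open>Disturbing run: run s0 U w psi ns m = |s_m>, with checkpoints n_1 < n_2 < ...
  given as ns 0 < ns 1 < ...\<close>
fun dist_run :: "complex vec \<Rightarrow> (nat \<Rightarrow> complex mat) \<Rightarrow> (nat \<Rightarrow> nat) \<Rightarrow> complex vec
     \<Rightarrow> (nat \<Rightarrow> nat) \<Rightarrow> nat \<Rightarrow> complex vec" where
  "dist_run s0 U w psi ns 0 = s0"
| "dist_run s0 U w psi ns (Suc m) =
     U (w m) *\<^sub>v (if m \<in> range ns then psi else dist_run s0 U w psi ns m)"

definition fD :: "nat \<Rightarrow> complex vec \<Rightarrow> (nat \<Rightarrow> complex mat) \<Rightarrow> complex vec set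
     \<Rightarrow> (nat \<Rightarrow> nat) \<Rightarrow> real" where
  "fD d s0 U F w =
    (let S = {(INF i. (cmod (dist_run s0 U w psi ns (ns i) \<bullet>c psi))\<^sup>2) | psi ns.
                 psi \<in> F \<and> unit_vec_c d psi \<and> strict_mono ns}
     in if S = {} then 0 else Sup S)"

definition lang_eq1 :: "nat \<Rightarrow> complex vec \<Rightarrow> nat set \<Rightarrow> (nat \<Rightarrow> complex mat) \<Rightarrow> complex vec set
     \<Rightarrow> (nat \<Rightarrow> nat) set" where
  "lang_eq1 d s0 Sig U F = {w \<in> omega_words Sig. fD d s0 U F w = 1}"

definition lang_gt :: "real \<Rightarrow> nat \<Rightarrow> complex vec \<Rightarrow> nat set \<Rightarrow> (nat \<Rightarrow> complex mat)
     \<Rightarrow> complex vec set \<Rightarrow> (nat \<Rightarrow> nat) set" where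
  "lang_gt lam d s0 Sig U F = {w \<in> omega_words Sig. fD d s0 U F w > lam}"

definition QBA_D_eq1 :: "(nat \<Rightarrow> nat) set set" where
  "QBA_D_eq1 = {L. \<exists>d s0 Sig U F. quantum_automaton d s0 Sig U F \<and> L = lang_eq1 d s0 Sig U F}"

definition QBA_D_gt :: "real \<Rightarrow> (nat \<Rightarrow> nat) set set" where
  "QBA_D_gt lam = {L. \<exists>d s0 Sig U F. quantum_automaton d s0 Sig U F \<and> L = lang_gt lam d s0 Sig U F}"

end

(*
  The separating automaton A lives on C^2: letter 0 acts as the identity, letter 1 as the
  rotation R with cos = 3/5, sin = 4/5, letter 2 as its inverse, and the accepting space is the
  line through e0.  Both 0^omega and 1 2 0^omega have value 1, but no word 1^k 0^omega with
  k > 0 does: in every run some checkpoint sees R^m v for a unit vector v on the line and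
  0 < m <= k, and R^m v never returns to the line because (3 + 4i)^m has nonzero imaginary part
  (it is congruent to 3 + 4i modulo 5).

  On the other hand, in any automaton B the powers of a unitary U_a come back arbitrarily close
  to s0 (compactness of the sphere), and perturbing s0 only moves the first checkpoint overlap a
  little.  Hence if w has value > lam in B, then so does a^k w for some k > 0.  If B recognised
  the =1 language of A with threshold lam, taking w = 0^omega and a = 1 would put some
  1^k 0^omega into that language.
*)

theory Submission
  imports Defs "HOL-Analysis.Elementary_Metric_Spaces" "HOL-Analysis.L2_Norm"
begin

section \<open>Norms and unitary matrices\<close>

definition cvec_norm :: "complex vec \<Rightarrow> real" where
  "cvec_norm v = L2_set (\<lambda>i. cmod (v $ i)) {..<dim_vec v}"

lemma cvec_norm_nonneg: "0 \<le> cvec_norm v"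
  unfolding cvec_norm_def by simp

lemma cscalar_prod_self: "v \<bullet>c v = complex_of_real ((cvec_norm v)\<^sup>2)"
proof -
  have "v \<bullet>c v = (\<Sum>i<dim_vec v. complex_of_real ((cmod (v $ i))\<^sup>2))"
    unfolding scalar_prod_def by (intro sum.cong) (auto simp flip: complex_norm_square)
  also have "\<dots> = complex_of_real ((cvec_norm v)\<^sup>2)"
    unfolding cvec_norm_def L2_set_def by (simp add: sum_nonneg)
  finally show ?thesis .
qed

lemma cmod_index_le_cvec_norm: "i < dim_vec v \<Longrightarrow> cmod (v $ i) \<le> cvec_norm v"
  unfolding cvec_norm_def by (rule member_le_L2_set) auto

lemma cvec_norm_le_sum: "cvec_norm v \<le> (\<Sum>i<dim_vec v. cmod (v $ i))"
  unfolding cvec_norm_def using L2_set_le_sum_abs[of "\<lambda>i. cmod (v $ i)"] by simp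

lemma unit_vec_c_cvec_norm:
  assumes "unit_vec_c d v"
  shows "cvec_norm v = 1"
proof -
  have "(cvec_norm v)\<^sup>2 = 1"
    using assms unfolding unit_vec_c_def cscalar_prod_self by (simp only: of_real_eq_1_iff)
  then show ?thesis
    using cvec_norm_nonneg power2_eq_iff_nonneg[of "cvec_norm v" 1] by simp
qed

lemma cmod_cscalar_prod_le:
  assumes "dim_vec u = dim_vec v"
  shows "cmod (v \<bullet>c u) \<le> cvec_norm v * cvec_norm u"
proof -
  have "cmod (v \<bullet>c u) = cmod (\<Sum>i<dim_vec v. v $ i * cnj (u $ i))"
    using assms by (simp add: scalar_prod_def atLeast0LessThan)
  also have "\<dots> \<le> (\<Sum>i<dim_vec v. \<bar>cmod (v $ i)\<bar> * \<bar>cmod (u $ i)\<bar>)"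
    by (rule order_trans[OF norm_sum]) (simp add: norm_mult)
  also have "\<dots> \<le> cvec_norm v * cvec_norm u"
    unfolding cvec_norm_def assms by (rule L2_set_mult_ineq)
  finally show ?thesis .
qed

lemma adjoint_cscalar_prod:
  fixes A :: "complex mat"
  assumes A: "A \<in> carrier_mat n m" and x: "x \<in> carrier_vec m" and y: "y \<in> carrier_vec n"
  shows "(A *\<^sub>v x) \<bullet>c y = x \<bullet>c (mat_adjoint A *\<^sub>v y)"
proof -
  have adj: "mat_adjoint A $$ (j, i) = cnj (A $$ (i, j))" if "j < m" "i < n" for i j
    using A that unfolding mat_adjoint_def by (simp add: mat_of_rows_def)
  have "(A *\<^sub>v x) \<bullet>c y = (\<Sum>i<n. \<Sum>j<m. A $$ (i, j) * x $ j * cnj (y $ i))"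
    using A x y by (simp add: scalar_prod_def atLeast0LessThan sum_distrib_right)
  also have "\<dots> = (\<Sum>j<m. \<Sum>i<n. A $$ (i, j) * x $ j * cnj (y $ i))"
    by (rule sum.swap)
  also have "\<dots> = x \<bullet>c (mat_adjoint A *\<^sub>v y)"
    using A x y by (simp add: scalar_prod_def atLeast0LessThan adj mat_adjoint_def cnj_sum
        sum_distrib_left mult_ac)
  finally show ?thesis .
qed

lemma unitary_carrier: "unitary_c d U \<Longrightarrow> v \<in> carrier_vec d \<Longrightarrow> U *\<^sub>v v \<in> carrier_vec d"
  unfolding unitary_c_def by auto

lemma unitary_cvec_norm:
  assumes U: "unitary_c d U" and v: "v \<in> carrier_vec d"
  shows "cvec_norm (U *\<^sub>v v) = cvec_norm v"
proof -
  have UC: "U \<in> carrier_mat d d" and UU: "mat_adjoint U * U = 1\<^sub>m d"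
    using U unfolding unitary_c_def by auto
  have "(U *\<^sub>v v) \<bullet>c (U *\<^sub>v v) = v \<bullet>c (mat_adjoint U *\<^sub>v (U *\<^sub>v v))"
    using UC v by (intro adjoint_cscalar_prod) auto
  also have "\<dots> = v \<bullet>c ((mat_adjoint U * U) *\<^sub>v v)"
    using UC v by (subst assoc_mult_mat_vec) (auto simp: mat_adjoint_def)
  also have "\<dots> = v \<bullet>c v"
    using v by (simp add: UU)
  finally have "(cvec_norm (U *\<^sub>v v))\<^sup>2 = (cvec_norm v)\<^sup>2"
    unfolding cscalar_prod_self of_real_eq_iff .
  then show ?thesis
    using cvec_norm_nonneg by (simp add: power2_eq_iff_nonneg)
qed

lemma unitary_unit_vec: "unitary_c d U \<Longrightarrow> unit_vec_c d v \<Longrightarrow> unit_vec_c d (U *\<^sub>v v)"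
  unfolding unit_vec_c_def cscalar_prod_self by (simp add: unitary_carrier unitary_cvec_norm)

section \<open>Disturbing runs\<close>

fun evolve :: "(nat \<Rightarrow> complex mat) \<Rightarrow> (nat \<Rightarrow> nat) \<Rightarrow> nat \<Rightarrow> nat \<Rightarrow> complex vec
    \<Rightarrow> complex vec" where
  "evolve U w s 0 v = v"
| "evolve U w s (Suc n) v = U (w (s + n)) *\<^sub>v evolve U w s n v"

definition unitary_along :: "nat \<Rightarrow> (nat \<Rightarrow> complex mat) \<Rightarrow> (nat \<Rightarrow> nat) \<Rightarrow> bool" where
  "unitary_along d U w \<longleftrightarrow> (\<forall>i. unitary_c d (U (w i)))"

lemma quantum_automaton_unitary_along:
  "quantum_automaton d s0 Sig U F \<Longrightarrow> w \<in> omega_words Sig \<Longrightarrow> unitary_along d U w"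
  unfolding quantum_automaton_def omega_words_def unitary_along_def by auto

lemma evolve_add: "evolve U w s (m + n) v = evolve U w (s + m) n (evolve U w s m v)"
  by (induction n) (simp_all add: add.assoc)

lemma evolve_cong:
  "(\<And>t. t < n \<Longrightarrow> U (w (s + t)) = U' (w' (s' + t))) \<Longrightarrow> evolve U w s n v = evolve U' w' s' n v"
  by (induction n) simp_all

lemma evolve_carrier: "unitary_along d U w \<Longrightarrow> v \<in> carrier_vec d \<Longrightarrow> evolve U w s n v \<in> carrier_vec d"
  by (induction n) (auto simp: unitary_along_def unitary_carrier)

lemma evolve_cvec_norm:
  assumes "unitary_along d U w" "v \<in> carrier_vec d"
  shows "cvec_norm (evolve U w s n v) = cvec_norm v"
  using assms
  by (induction n)
    (simp_all add: unitary_along_def unitary_cvec_norm[OF _ evolve_carrier[OF assms]])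

lemma evolve_diff:
  assumes "unitary_along d U w" "v \<in> carrier_vec d" "v' \<in> carrier_vec d"
  shows "evolve U w s n (v - v') = evolve U w s n v - evolve U w s n v'"
proof (induction n)
  case (Suc n)
  have "U (w (s + n)) \<in> carrier_mat d d"
    using assms(1) unfolding unitary_along_def unitary_c_def by auto
  then show ?case
    using Suc assms by (simp add: mult_minus_distrib_mat_vec evolve_carrier)
qed simp

lemma strict_mono_not_in_range:
  assumes "strict_mono ns" "ns i < m" "m < ns (Suc i)"
  shows "m \<notin> range ns"
proof
  assume "m \<in> range ns"
  then obtain j where j: "m = ns j" by auto
  with assms have "i < j" and "j < Suc i"
    using strict_mono_less by metis+
  then show False by simp
qed

lemma dist_run_upto_first:
  assumes "strict_mono ns"
  shows "m \<le> ns 0 \<Longrightarrow> dist_run s0 U w psi ns m = evolve U w 0 m s0"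
proof (induction m)
  case (Suc m)
  have "m \<notin> range ns"
    using Suc.prems assms by (auto simp: strict_mono_less_eq not_less_eq_eq[symmetric])
  then show ?case
    using Suc by simp
qed simp

lemma dist_run_after_checkpoint:
  assumes "strict_mono ns"
  shows "0 < t \<Longrightarrow> ns i + t \<le> ns (Suc i) \<Longrightarrow>
    dist_run s0 U w psi ns (ns i + t) = evolve U w (ns i) t psi"
proof (induction t)
  case (Suc t)
  show ?case
  proof (cases "t = 0")
    case False
    then have "ns i + t \<notin> range ns"
      using Suc.prems by (intro strict_mono_not_in_range[OF assms, of i]) auto
    then show ?thesis
      using Suc False by simp
  qed simp
qed simp

lemma dist_run_next_checkpoint:
  assumes "strict_mono ns"
  shows "dist_run s0 U w psi ns (ns (Suc i)) = evolve U w (ns i) (ns (Suc i) - ns i) psi"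
proof -
  have "ns i < ns (Suc i)"
    using assms by (simp add: strict_mono_less)
  then show ?thesis
    using dist_run_after_checkpoint[OF assms, of "ns (Suc i) - ns i" i] by simp
qed

lemma dist_run_unit_vec:
  assumes "unitary_along d U w" "unit_vec_c d s0" "unit_vec_c d psi"
  shows "unit_vec_c d (dist_run s0 U w psi ns m)"
  using assms by (induction m) (simp_all add: unitary_along_def unitary_unit_vec)

lemma dist_run_checkpoint_from_start:
  assumes ns: "strict_mono ns"
  obtains i m v where "0 < m" "v = s0 \<or> v = psi" "dist_run s0 U w psi ns (ns i) = evolve U w 0 m v"
proof (cases "ns 0 = 0")
  case True
  moreover have "ns 0 < ns 1"
    using ns by (simp add: strict_mono_less)
  ultimately show ?thesis
    using that[of "ns 1" psi 1] dist_run_next_checkpoint[OF ns, of s0 U w psi 0] by simp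
next
  case False
  then show ?thesis
    using that[of "ns 0" s0 0] dist_run_upto_first[OF ns] by simp
qed

definition overlap :: "complex vec \<Rightarrow> (nat \<Rightarrow> complex mat) \<Rightarrow> (nat \<Rightarrow> nat) \<Rightarrow> complex vec
    \<Rightarrow> (nat \<Rightarrow> nat) \<Rightarrow> nat \<Rightarrow> real" where
  "overlap s0 U w psi ns i = (cmod (dist_run s0 U w psi ns (ns i) \<bullet>c psi))\<^sup>2"

definition run_values :: "nat \<Rightarrow> complex vec \<Rightarrow> (nat \<Rightarrow> complex mat) \<Rightarrow> complex vec set
    \<Rightarrow> (nat \<Rightarrow> nat) \<Rightarrow> real set" where
  "run_values d s0 U F w = {(INF i. overlap s0 U w psi ns i) | psi ns.
     psi \<in> F \<and> unit_vec_c d psi \<and> strict_mono ns}"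

lemma fD_run_values:
  "fD d s0 U F w = (if run_values d s0 U F w = {} then 0 else Sup (run_values d s0 U F w))"
  unfolding fD_def run_values_def overlap_def Let_def by simp

lemma INF_overlap_le: "(INF i. overlap s0 U w psi ns i) \<le> overlap s0 U w psi ns i"
  by (rule cINF_lower) (auto intro: bdd_belowI[of _ 0] simp: overlap_def)

lemma overlap_le_1:
  assumes "unitary_along d U w" "unit_vec_c d s0" "unit_vec_c d psi"
  shows "overlap s0 U w psi ns i \<le> 1"
proof -
  let ?s = "dist_run s0 U w psi ns (ns i)"
  have "unit_vec_c d ?s"
    using assms by (rule dist_run_unit_vec)
  then have "cmod (?s \<bullet>c psi) \<le> cvec_norm ?s * cvec_norm psi"
    using assms(3) by (intro cmod_cscalar_prod_le) (auto simp: unit_vec_c_def)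
  also have "\<dots> = 1"
    using \<open>unit_vec_c d ?s\<close> assms(3) by (simp add: unit_vec_c_cvec_norm)
  finally show ?thesis
    unfolding overlap_def by (simp add: power_le_one)
qed

lemma run_values_le_1:
  assumes QA: "quantum_automaton d s0 Sig U F" and w: "w \<in> omega_words Sig"
    and x: "x \<in> run_values d s0 U F w"
  shows "x \<le> 1"
proof -
  obtain psi ns where "x = (INF i. overlap s0 U w psi ns i)" and "unit_vec_c d psi"
    using x unfolding run_values_def by blast
  moreover have "unitary_along d U w" "unit_vec_c d s0"
    using QA w by (simp_all add: quantum_automaton_unitary_along quantum_automaton_def)
  ultimately show ?thesis
    using INF_overlap_le[of s0 U w psi ns 0] overlap_le_1[of d U w s0 psi ns 0] by linarith
qed

lemma INF_overlap_le_fD: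
  assumes QA: "quantum_automaton d s0 Sig U F" and w: "w \<in> omega_words Sig"
    and "psi \<in> F" "unit_vec_c d psi" "strict_mono ns"
  shows "(INF i. overlap s0 U w psi ns i) \<le> fD d s0 U F w"
proof -
  have "(INF i. overlap s0 U w psi ns i) \<in> run_values d s0 U F w"
    unfolding run_values_def using assms by blast
  moreover have "bdd_above (run_values d s0 U F w)"
    using run_values_le_1[OF QA w] by (intro bdd_aboveI) blast
  ultimately show ?thesis
    unfolding fD_run_values by (auto intro: cSup_upper)
qed

lemma fD_eq_1I:
  assumes QA: "quantum_automaton d s0 Sig U F" and w: "w \<in> omega_words Sig"
    and "psi \<in> F" "unit_vec_c d psi" "strict_mono ns"
    and one: "\<And>i. overlap s0 U w psi ns i = 1"
  shows "fD d s0 U F w = 1"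
proof -
  have "(INF i. overlap s0 U w psi ns i) \<in> run_values d s0 U F w"
    unfolding run_values_def using assms by blast
  then have mem: "1 \<in> run_values d s0 U F w"
    by (simp add: one)
  then have "Sup (run_values d s0 U F w) = 1"
    using run_values_le_1[OF QA w] by (intro cSup_eq_maximum)
  with mem show ?thesis
    unfolding fD_run_values by auto
qed

lemma fD_leI:
  assumes "0 \<le> c"
    and below: "\<And>psi ns. psi \<in> F \<Longrightarrow> unit_vec_c d psi \<Longrightarrow> strict_mono ns \<Longrightarrow>
      \<exists>i. overlap s0 U w psi ns i \<le> c"
  shows "fD d s0 U F w \<le> c"
proof -
  have "x \<le> c" if x: "x \<in> run_values d s0 U F w" for x
  proof -
    obtain psi ns where "x = (INF i. overlap s0 U w psi ns i)"
      and "psi \<in> F" "unit_vec_c d psi" "strict_mono ns"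
      using x unfolding run_values_def by blast
    with below show ?thesis
      using INF_overlap_le order_trans by metis
  qed
  then show ?thesis
    unfolding fD_run_values using assms(1) by (auto intro: cSup_least)
qed

lemma less_fD_obtains_run:
  assumes "0 \<le> lam" "lam < fD d s0 U F w"
  obtains psi ns where "psi \<in> F" "unit_vec_c d psi" "strict_mono ns"
    "lam < (INF i. overlap s0 U w psi ns i)"
proof -
  have "run_values d s0 U F w \<noteq> {}" and "lam < Sup (run_values d s0 U F w)"
    using assms unfolding fD_run_values by (auto split: if_splits)
  then obtain x where x: "x \<in> run_values d s0 U F w" and "lam < x"
    using less_cSupE by blast
  from x obtain psi ns where "x = (INF i. overlap s0 U w psi ns i)"
    and "psi \<in> F" "unit_vec_c d psi" "strict_mono ns"
    unfolding run_values_def by blast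
  with \<open>lam < x\<close> show ?thesis
    using that by blast
qed

section \<open>Recurrence\<close>

lemma cvec_seq_close_pair:
  fixes y :: "nat \<Rightarrow> complex vec"
  assumes carrier: "\<And>n. y n \<in> carrier_vec d" and bounded: "\<And>n. cvec_norm (y n) \<le> B"
    and "0 < e"
  shows "\<exists>j l. j < l \<and> cvec_norm (y l - y j) < e"
proof -
  define p where "p z = (Re z, Im z)" for z :: complex
  have dist_p: "dist (p a) (p b) = cmod (a - b)" for a b
    by (simp add: p_def dist_Pair_Pair dist_real_def cmod_def power2_abs)
  define eta where "eta = e / (2 * real d + 1)"
  have "0 < eta"
    using \<open>0 < e\<close> by (simp add: eta_def)
  have "norm (p (y n $ k)) \<le> B" if "k < d" for n k
    using cmod_index_le_cvec_norm[of k "y n"] carrier[of n] bounded[of n] that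
    by (simp add: p_def norm_Pair cmod_def)
  then have "bounded ((\<lambda>x. x k) ` range (\<lambda>n i. p (y n $ i)))" if "k \<in> {..<d}" for k
    using that by (intro boundedI[of _ B]) auto
  then obtain L r where r: "strict_mono r"
    and lim: "\<forall>\<epsilon>>0. \<forall>\<^sub>F n in sequentially. \<forall>i\<in>{..<d}. dist (p (y (r n) $ i)) (L i) < \<epsilon>"
    using compact_lemma_general[where f = "\<lambda>n i. p (y n $ i)" and proj = "\<lambda>x k. x k"
        and unproj = id and basis = "{..<d}"] by auto
  then obtain N where N: "\<And>n i. N \<le> n \<Longrightarrow> i < d \<Longrightarrow> dist (p (y (r n) $ i)) (L i) < eta"
    using \<open>0 < eta\<close> unfolding eventually_sequentially by blast
  let ?j = "r N" and ?l = "r (Suc N)"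
  have "cmod ((y ?l - y ?j) $ i) < 2 * eta" if "i < d" for i
    using dist_triangle_less_add[OF N N, of "Suc N" i N] that carrier[of ?j] carrier[of ?l]
    by (simp add: dist_p)
  then have "(\<Sum>i<d. cmod ((y ?l - y ?j) $ i)) \<le> (\<Sum>i<d. 2 * eta)"
    by (intro sum_mono) (simp add: less_imp_le)
  moreover have "cvec_norm (y ?l - y ?j) \<le> (\<Sum>i<d. cmod ((y ?l - y ?j) $ i))"
    using cvec_norm_le_sum[of "y ?l - y ?j"] carrier[of ?j] by simp
  moreover have "(\<Sum>i<d. 2 * eta) < e"
    using \<open>0 < e\<close> by (simp add: eta_def field_simps)
  moreover have "?j < ?l"
    using r by (simp add: strict_mono_less)
  ultimately have "cvec_norm (y ?l - y ?j) < e"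
    by linarith
  with \<open>?j < ?l\<close> show ?thesis
    by blast
qed

lemma unitary_power_recurrence:
  assumes Ua: "unitary_c d (U a)" and x: "x \<in> carrier_vec d" and "0 < e"
  shows "\<exists>k>0. cvec_norm (evolve U (\<lambda>_. a) 0 k x - x) < e"
proof -
  define y where "y n = evolve U (\<lambda>_. a) 0 n x" for n
  have along: "unitary_along d U (\<lambda>_. a)"
    using Ua by (simp add: unitary_along_def)
  obtain j l where "j < l" and close: "cvec_norm (y l - y j) < e"
    using cvec_seq_close_pair[of y d "cvec_norm x" e] evolve_carrier[OF along x]
      evolve_cvec_norm[OF along x] \<open>0 < e\<close> unfolding y_def by auto
  define k where "k = l - j"
  have "y l = evolve U (\<lambda>_. a) k j (y k)"
    using \<open>j < l\<close> evolve_add[of U "\<lambda>_. a" 0 k j x] by (simp add: y_def k_def)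
  also have "\<dots> = evolve U (\<lambda>_. a) 0 j (y k)"
    by (rule evolve_cong) simp
  finally have "y l - y j = evolve U (\<lambda>_. a) 0 j (y k - x)"
    using evolve_diff[OF along evolve_carrier[OF along x] x] by (simp add: y_def)
  moreover have "y k - x \<in> carrier_vec d"
    using evolve_carrier[OF along x] x by (simp add: y_def)
  ultimately have "cvec_norm (y k - x) < e"
    using close evolve_cvec_norm[OF along] by simp
  moreover have "0 < k"
    using \<open>j < l\<close> by (simp add: k_def)
  ultimately show ?thesis
    unfolding y_def by blast
qed

lemma evolve_overlap_lipschitz:
  assumes along: "unitary_along d U w" and x: "x \<in> carrier_vec d" and z: "z \<in> carrier_vec d"
    and psi: "unit_vec_c d psi"
  shows "\<bar>cmod (evolve U w s n x \<bullet>c psi) - cmod (evolve U w s n z \<bullet>c psi)\<bar> \<le> cvec_norm (x - z)"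
proof -
  have psi_carrier: "psi \<in> carrier_vec d"
    using psi by (simp add: unit_vec_c_def)
  have "\<bar>cmod (evolve U w s n x \<bullet>c psi) - cmod (evolve U w s n z \<bullet>c psi)\<bar>
      \<le> cmod (evolve U w s n x \<bullet>c psi - evolve U w s n z \<bullet>c psi)"
    by (rule norm_triangle_ineq3)
  also have "evolve U w s n x \<bullet>c psi - evolve U w s n z \<bullet>c psi = evolve U w s n (x - z) \<bullet>c psi"
    using evolve_carrier[OF along] x z psi_carrier
    by (simp add: evolve_diff[OF along x z] minus_scalar_prod_distrib[of _ d])
  also have "cmod \<dots> \<le> cvec_norm (evolve U w s n (x - z)) * cvec_norm psi"
    using evolve_carrier[OF along, of "x - z" s n] x z psi_carrier
    by (intro cmod_cscalar_prod_le) (simp add: carrier_vecD)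
  also have "\<dots> = cvec_norm (x - z)"
    using evolve_cvec_norm[OF along, of "x - z"] x z unit_vec_c_cvec_norm[OF psi] by simp
  finally show ?thesis .
qed

lemma overlap_prefix:
  fixes a k :: nat and w ns :: "nat \<Rightarrow> nat"
  defines "w' \<equiv> \<lambda>i. if i < k then a else w (i - k)" and "ns' \<equiv> \<lambda>i. ns i + k"
  assumes ns: "strict_mono ns"
  shows "overlap s0 U w' psi ns' 0 =
      (cmod (evolve U w 0 (ns 0) (evolve U (\<lambda>_. a) 0 k s0) \<bullet>c psi))\<^sup>2"
    and "overlap s0 U w' psi ns' (Suc i) = overlap s0 U w psi ns (Suc i)"
proof -
  have ns': "strict_mono ns'"
    using ns by (simp add: ns'_def strict_mono_def)
  have "dist_run s0 U w' psi ns' (ns' 0) = evolve U w' 0 (k + ns 0) s0"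
    using dist_run_upto_first[OF ns', of "ns' 0"] by (simp add: ns'_def add.commute)
  also have "\<dots> = evolve U w' k (ns 0) (evolve U w' 0 k s0)"
    by (simp add: evolve_add)
  also have "evolve U w' 0 k s0 = evolve U (\<lambda>_. a) 0 k s0"
    by (rule evolve_cong) (simp add: w'_def)
  also have "evolve U w' k (ns 0) (evolve U (\<lambda>_. a) 0 k s0)
      = evolve U w 0 (ns 0) (evolve U (\<lambda>_. a) 0 k s0)"
    by (rule evolve_cong) (simp add: w'_def)
  finally show "overlap s0 U w' psi ns' 0 =
      (cmod (evolve U w 0 (ns 0) (evolve U (\<lambda>_. a) 0 k s0) \<bullet>c psi))\<^sup>2"
    unfolding overlap_def by simp
  have "dist_run s0 U w' psi ns' (ns' (Suc i)) = evolve U w' (ns i + k) (ns (Suc i) - ns i) psi"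
    using dist_run_next_checkpoint[OF ns', of s0 U w' psi i] by (simp add: ns'_def)
  also have "\<dots> = evolve U w (ns i) (ns (Suc i) - ns i) psi"
    by (rule evolve_cong) (simp add: w'_def)
  also have "\<dots> = dist_run s0 U w psi ns (ns (Suc i))"
    using dist_run_next_checkpoint[OF ns] by simp
  finally show "overlap s0 U w' psi ns' (Suc i) = overlap s0 U w psi ns (Suc i)"
    unfolding overlap_def by simp
qed

lemma less_INF_from_head_tail:
  fixes f g :: "nat \<Rightarrow> real"
  assumes "bdd_below (range g)" "lam < f 0" "lam < (INF i. g i)" "\<And>i. f (Suc i) = g (Suc i)"
  shows "lam < (INF i. f i)"
proof -
  have "min (f 0) (INF i. g i) \<le> (INF i. f i)"
  proof (rule cINF_greatest)
    show "min (f 0) (INF i. g i) \<le> f i" for i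
      using cINF_lower[OF assms(1)] assms(4) by (cases i) (auto intro: min.coboundedI2)
  qed simp
  then show ?thesis
    using assms(2,3) by linarith
qed

lemma prefix_power_overlap_gt:
  assumes along: "unitary_along d U w" and Ua: "unitary_c d (U a)" and s0: "s0 \<in> carrier_vec d"
    and psi: "unit_vec_c d psi" and "0 \<le> lam"
    and gt: "lam < (cmod (evolve U w 0 n s0 \<bullet>c psi))\<^sup>2"
  shows "\<exists>k>0. lam < (cmod (evolve U w 0 n (evolve U (\<lambda>_. a) 0 k s0) \<bullet>c psi))\<^sup>2"
proof -
  define c0 where "c0 = cmod (evolve U w 0 n s0 \<bullet>c psi)"
  have "sqrt lam < c0"
    using gt by (simp add: c0_def real_less_lsqrt)
  then obtain k where "0 < k" and close: "cvec_norm (evolve U (\<lambda>_. a) 0 k s0 - s0) < c0 - sqrt lam"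
    using unitary_power_recurrence[of d U a s0 "c0 - sqrt lam"] Ua s0 by auto
  let ?c = "cmod (evolve U w 0 n (evolve U (\<lambda>_. a) 0 k s0) \<bullet>c psi)"
  have "evolve U (\<lambda>_. a) 0 k s0 \<in> carrier_vec d"
    using Ua s0 by (intro evolve_carrier) (simp_all add: unitary_along_def)
  then have "\<bar>?c - c0\<bar> \<le> cvec_norm (evolve U (\<lambda>_. a) 0 k s0 - s0)"
    unfolding c0_def by (rule evolve_overlap_lipschitz[OF along _ s0 psi])
  with close have "sqrt lam < ?c"
    by linarith
  then have "lam < ?c\<^sup>2"
    using real_sqrt_less_iff[of lam "?c\<^sup>2"] \<open>0 \<le> lam\<close> by simp
  with \<open>0 < k\<close> show ?thesis
    by blast
qed

text \<open>Only the first checkpoint sees the prefix \<open>a\<^sup>k\<close>, and it sees it through \<open>a\<^sup>k s0\<close>,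
  which recurrence brings as close to \<open>s0\<close> as needed.\<close>

lemma fD_prefix_power_gt:
  assumes QA: "quantum_automaton d s0 Sig U F" and w: "w \<in> omega_words Sig" and a: "a \<in> Sig"
    and lam: "0 \<le> lam" "lam < fD d s0 U F w"
  shows "\<exists>k>0. lam < fD d s0 U F (\<lambda>i. if i < k then a else w (i - k))"
proof -
  obtain psi ns where psi_F: "psi \<in> F" and psi: "unit_vec_c d psi" and ns: "strict_mono ns"
    and lt: "lam < (INF i. overlap s0 U w psi ns i)"
    using less_fD_obtains_run[OF lam] by blast
  have along: "unitary_along d U w"
    using QA w by (rule quantum_automaton_unitary_along)
  have s0: "s0 \<in> carrier_vec d" and Ua: "unitary_c d (U a)"
    using QA a by (auto simp: quantum_automaton_def unit_vec_c_def)
  have "lam < (cmod (evolve U w 0 (ns 0) s0 \<bullet>c psi))\<^sup>2"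
    using lt INF_overlap_le[of s0 U w psi ns 0] dist_run_upto_first[OF ns, of "ns 0"]
    unfolding overlap_def by simp
  then obtain k where "0 < k"
    and "lam < (cmod (evolve U w 0 (ns 0) (evolve U (\<lambda>_. a) 0 k s0) \<bullet>c psi))\<^sup>2"
    using prefix_power_overlap_gt[OF along Ua s0 psi lam(1)] by blast
  define w' where "w' = (\<lambda>i. if i < k then a else w (i - k))"
  define ns' where "ns' = (\<lambda>i. ns i + k)"
  have first: "lam < overlap s0 U w' psi ns' 0"
    unfolding w'_def ns'_def overlap_prefix(1)[OF ns] by fact
  have "lam < (INF i. overlap s0 U w' psi ns' i)"
  proof (rule less_INF_from_head_tail[where g = "overlap s0 U w psi ns"])
    show "bdd_below (range (overlap s0 U w psi ns))"
      by (auto intro: bdd_belowI[of _ 0] simp: overlap_def)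
    show "overlap s0 U w' psi ns' (Suc i) = overlap s0 U w psi ns (Suc i)" for i
      unfolding w'_def ns'_def by (rule overlap_prefix(2)[OF ns])
  qed (use first lt in auto)
  also have "\<dots> \<le> fD d s0 U F w'"
    using w a ns by (intro INF_overlap_le_fD[OF QA _ psi_F psi])
      (auto simp: omega_words_def w'_def ns'_def strict_mono_def)
  finally show ?thesis
    using \<open>0 < k\<close> unfolding w'_def by blast
qed

section \<open>The separating automaton\<close>

text \<open>\<open>gauss_pow j\<close> holds the real and imaginary parts of \<open>(3 + 4i)\<^sup>j\<close>.\<close>

fun gauss_pow :: "nat \<Rightarrow> int \<times> int" where
  "gauss_pow 0 = (1, 0)"
| "gauss_pow (Suc j) = (3 * fst (gauss_pow j) - 4 * snd (gauss_pow j),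
                         4 * fst (gauss_pow j) + 3 * snd (gauss_pow j))"

lemma gauss_pow_sum_squares: "(fst (gauss_pow j))\<^sup>2 + (snd (gauss_pow j))\<^sup>2 = 25 ^ j"
  by (induction j) (simp_all add: power2_eq_square algebra_simps)

lemma mod_5_step:
  fixes p q :: int
  assumes "p mod 5 = 3" "q mod 5 = 4"
  shows "(3 * p - 4 * q) mod 5 = 3 \<and> (4 * p + 3 * q) mod 5 = 4"
proof -
  define a b where "a = p div 5" and "b = q div 5"
  have "p = 5 * a + 3" "q = 5 * b + 4"
    using assms div_mult_mod_eq[of p 5] div_mult_mod_eq[of q 5] unfolding a_def b_def by linarith+
  then have "3 * p - 4 * q = 3 + 5 * (3 * a - 4 * b - 2)"
    and "4 * p + 3 * q = 4 + 5 * (4 * a + 3 * b + 4)"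
    by simp_all
  then show ?thesis
    by (simp only: mod_mult_self2) simp
qed

lemma gauss_pow_mod_5: "0 < j \<Longrightarrow> fst (gauss_pow j) mod 5 = 3 \<and> snd (gauss_pow j) mod 5 = 4"
proof (induction j)
  case (Suc j)
  show ?case
  proof (cases j)
    case (Suc i)
    then have "fst (gauss_pow j) mod 5 = 3" "snd (gauss_pow j) mod 5 = 4"
      using Suc.IH by simp_all
    then show ?thesis
      by (simp add: mod_5_step)
  qed simp
qed simp

lemma gauss_pow_snd_nonzero: "0 < j \<Longrightarrow> snd (gauss_pow j) \<noteq> 0"
  using gauss_pow_mod_5[of j] by auto

definition cos_rot :: "nat \<Rightarrow> complex" where
  "cos_rot j = of_int (fst (gauss_pow j)) / 5 ^ j"

definition sin_rot :: "nat \<Rightarrow> complex" where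
  "sin_rot j = of_int (snd (gauss_pow j)) / 5 ^ j"

lemma cos_rot_Suc: "cos_rot (Suc j) = (3 * cos_rot j - 4 * sin_rot j) / 5"
  by (simp add: cos_rot_def sin_rot_def field_simps)

lemma sin_rot_Suc: "sin_rot (Suc j) = (4 * cos_rot j + 3 * sin_rot j) / 5"
  by (simp add: cos_rot_def sin_rot_def field_simps)

lemma cmod_cos_rot_less_1:
  assumes "0 < j"
  shows "(cmod (cos_rot j))\<^sup>2 < 1"
proof -
  have "0 < (snd (gauss_pow j))\<^sup>2"
    using gauss_pow_snd_nonzero[OF assms] by simp
  then have "(fst (gauss_pow j))\<^sup>2 < 25 ^ j"
    using gauss_pow_sum_squares[of j] by linarith
  then have "(real_of_int (fst (gauss_pow j)))\<^sup>2 < 25 ^ j"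
    by (metis of_int_less_iff of_int_numeral of_int_power)
  also have "(25::real) ^ j = (5 ^ j)\<^sup>2"
    by (simp flip: power_mult_distrib add: power2_eq_square)
  finally show ?thesis
    by (simp add: cos_rot_def norm_divide norm_power power_divide)
qed

definition rot :: "complex mat" where
  "rot = mat 2 2 (\<lambda>(i, j). if i = j then 3/5 else if i = 0 then -4/5 else 4/5)"

definition rot_inv :: "complex mat" where
  "rot_inv = mat 2 2 (\<lambda>(i, j). if i = j then 3/5 else if i = 0 then 4/5 else -4/5)"

definition UA :: "nat \<Rightarrow> complex mat" where
  "UA n = (if n = 1 then rot else if n = 2 then rot_inv else 1\<^sub>m 2)"

definition FA :: "complex vec set" where
  "FA = {v \<in> carrier_vec 2. v $ 1 = 0}"

definition e0 :: "complex vec" where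
  "e0 = unit_vec 2 0"

lemma less_2_iff: "(i::nat) < 2 \<longleftrightarrow> i = 0 \<or> i = 1"
  by auto

lemma sum_upto_2: "(\<Sum>i = 0..<(2::nat). f i) = f 0 + (f 1 :: 'a :: comm_monoid_add)"
  by (simp add: eval_nat_numeral)

lemma rot_carrier: "rot \<in> carrier_mat 2 2" "rot_inv \<in> carrier_mat 2 2"
  by (simp_all add: rot_def rot_inv_def)

lemma rot_rot_inv: "rot * rot_inv = 1\<^sub>m 2" "rot_inv * rot = 1\<^sub>m 2"
  by (rule eq_matI;
      auto simp: rot_def rot_inv_def scalar_prod_def sum_upto_2 less_2_iff col_def row_def)+

lemma adjoint_rot: "mat_adjoint rot = rot_inv" "mat_adjoint rot_inv = rot"
  by (rule eq_matI; auto simp: mat_adjoint_def rot_def rot_inv_def mat_of_rows_def less_2_iff)+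

lemma adjoint_one: "mat_adjoint (1\<^sub>m n :: complex mat) = 1\<^sub>m n"
  by (rule eq_matI) (auto simp: mat_adjoint_def mat_of_rows_def)

lemma rot_mult_vec:
  "v \<in> carrier_vec 2 \<Longrightarrow>
    rot *\<^sub>v v =
      vec 2 (\<lambda>i. if i = 0 then (3 * v $ 0 - 4 * v $ 1) / 5 else (4 * v $ 0 + 3 * v $ 1) / 5)"
  by (intro eq_vecI) (auto simp: rot_def scalar_prod_def sum_upto_2 less_2_iff row_def)

lemma e0_unit: "unit_vec_c 2 e0"
  unfolding unit_vec_c_def e0_def by (simp add: scalar_prod_def sum_upto_2)

lemma e0_FA: "e0 \<in> FA"
  unfolding FA_def e0_def by simp

lemma quantum_automaton_A: "quantum_automaton 2 e0 {0, 1, 2} UA FA"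
  unfolding quantum_automaton_def
proof (intro conjI)
  show "\<forall>\<sigma>\<in>{0, 1, 2}. unitary_c 2 (UA \<sigma>)"
    by (auto simp: unitary_c_def UA_def adjoint_rot adjoint_one rot_rot_inv)
      (auto simp: rot_def rot_inv_def)
  show "subspace_c 2 FA"
    unfolding subspace_c_def FA_def by auto
qed (simp_all add: e0_unit)

lemma cmod_FA_unit:
  assumes "psi \<in> FA" "unit_vec_c 2 psi"
  shows "cmod (psi $ 0) = 1"
proof -
  have "psi \<in> carrier_vec 2" "psi $ 1 = 0"
    using assms(1) by (auto simp: FA_def)
  then have "cvec_norm psi = cmod (psi $ 0)"
    unfolding cvec_norm_def L2_set_def by (simp add: lessThan_atLeast0 sum_upto_2)
  then show ?thesis
    using unit_vec_c_cvec_norm[OF assms(2)] by simp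
qed

lemma cmod_cscalar_prod_FA:
  assumes "psi \<in> FA" "unit_vec_c 2 psi" "v \<in> carrier_vec 2"
  shows "cmod (v \<bullet>c psi) = cmod (v $ 0)"
proof -
  have "psi \<in> carrier_vec 2" "psi $ 1 = 0"
    using assms(1) by (auto simp: FA_def)
  then show ?thesis
    using assms(3) cmod_FA_unit[OF assms(1,2)] by (simp add: scalar_prod_def sum_upto_2 norm_mult)
qed

definition prefix_ones :: "nat \<Rightarrow> nat \<Rightarrow> nat" where
  "prefix_ones k = (\<lambda>i. if i < k then 1 else 0)"

lemma evolve_prefix_ones:
  assumes "v \<in> FA"
  shows "evolve UA (prefix_ones k) 0 n v =
    vec 2 (\<lambda>i. v $ 0 * (if i = 0 then cos_rot (min n k) else sin_rot (min n k)))"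
proof (induction n)
  case 0
  show ?case
    using assms by (intro eq_vecI) (auto simp: FA_def cos_rot_def sin_rot_def less_2_iff)
next
  case (Suc n)
  show ?case
  proof (cases "n < k")
    case True
    then have "min (Suc n) k = Suc n" "min n k = n"
      by auto
    then show ?thesis
      using True unfolding evolve.simps Suc
      by (intro eq_vecI)
        (auto simp: UA_def prefix_ones_def rot_mult_vec cos_rot_Suc sin_rot_Suc less_2_iff
          field_simps)
  next
    case False
    then have "min (Suc n) k = min n k"
      by simp
    with False show ?thesis
      unfolding evolve.simps Suc \<open>min (Suc n) k = min n k\<close> by (simp add: UA_def prefix_ones_def)
  qed
qed

lemma fD_A_zeros: "fD 2 e0 UA FA (\<lambda>_. 0) = 1"
proof (rule fD_eq_1I[OF quantum_automaton_A _ e0_FA e0_unit, where ns = id])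
  show "(\<lambda>_. 0) \<in> omega_words {0, 1, 2}"
    by (simp add: omega_words_def)
  show "overlap e0 UA (\<lambda>_. 0) e0 id i = 1" for i
  proof -
    have "dist_run e0 UA (\<lambda>_. 0) e0 id i = e0"
      by (cases i) (simp_all add: UA_def e0_def)
    then show ?thesis
      using e0_unit by (simp add: overlap_def unit_vec_c_def)
  qed
qed (simp add: strict_mono_def)

definition rot_back :: "nat \<Rightarrow> nat" where
  "rot_back i = (if i = 0 then 1 else if i = 1 then 2 else 0)"

lemma fD_A_rot_back: "fD 2 e0 UA FA rot_back = 1"
proof (rule fD_eq_1I[OF quantum_automaton_A _ e0_FA e0_unit, where ns = "\<lambda>i. i + 2"])
  show "rot_back \<in> omega_words {0, 1, 2}"
    by (simp add: omega_words_def rot_back_def)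
  have ns: "strict_mono (\<lambda>i::nat. i + 2)"
    by (simp add: strict_mono_def)
  then show "strict_mono (\<lambda>i::nat. i + 2)" .
  show "overlap e0 UA rot_back e0 (\<lambda>i. i + 2) i = 1" for i
  proof -
    have e0: "e0 \<in> carrier_vec 2"
      by (simp add: e0_def)
    have "dist_run e0 UA rot_back e0 (\<lambda>i. i + 2) 2 = evolve UA rot_back 0 2 e0"
      using dist_run_upto_first[OF ns, of 2] by simp
    also have "\<dots> = rot_inv *\<^sub>v (rot *\<^sub>v e0)"
      by (simp add: numeral_2_eq_2 UA_def rot_back_def)
    also have "\<dots> = (rot_inv * rot) *\<^sub>v e0"
      using assoc_mult_mat_vec[OF rot_carrier(2,1) e0] by simp
    finally have first: "dist_run e0 UA rot_back e0 (\<lambda>i. i + 2) 2 = e0"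
      using e0 by (simp add: rot_rot_inv)
    have "dist_run e0 UA rot_back e0 (\<lambda>i. i + 2) (Suc j + 2) = e0" for j
      using dist_run_next_checkpoint[OF ns, of e0 UA rot_back e0 j] e0
      by (simp add: UA_def rot_back_def)
    then have "dist_run e0 UA rot_back e0 (\<lambda>i. i + 2) (i + 2) = e0"
      using first by (cases i) (simp_all add: numeral_2_eq_2 del: dist_run.simps)
    then show ?thesis
      using e0_unit by (simp add: overlap_def unit_vec_c_def)
  qed
qed

lemma fD_A_prefix_ones_less_1:
  assumes "0 < k"
  shows "fD 2 e0 UA FA (prefix_ones k) < 1"
proof -
  define c where "c = Max ((\<lambda>j. (cmod (cos_rot j))\<^sup>2) ` {1..k})"
  have "c < 1"
    unfolding c_def using assms cmod_cos_rot_less_1 by (subst Max_less_iff) auto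
  have c_ge: "(cmod (cos_rot (min m k)))\<^sup>2 \<le> c" if "0 < m" for m
    unfolding c_def using that assms by (intro Max_ge) auto
  have "fD 2 e0 UA FA (prefix_ones k) \<le> c"
  proof (rule fD_leI)
    show "0 \<le> c"
      by (rule order_trans[OF zero_le_power2 c_ge[of 1]]) simp
    fix psi and ns :: "nat \<Rightarrow> nat"
    assume psi_F: "psi \<in> FA" and psi: "unit_vec_c 2 psi" and ns: "strict_mono ns"
    obtain i m v where "0 < m" and v: "v = e0 \<or> v = psi"
      and run: "dist_run e0 UA (prefix_ones k) psi ns (ns i) = evolve UA (prefix_ones k) 0 m v"
      by (rule dist_run_checkpoint_from_start[OF ns])
    have "v \<in> FA" "cmod (v $ 0) = 1"
      using v psi_F psi e0_FA e0_unit cmod_FA_unit by auto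
    then have "overlap e0 UA (prefix_ones k) psi ns i = (cmod (cos_rot (min m k)))\<^sup>2"
      using run cmod_cscalar_prod_FA[OF psi_F psi]
      by (simp add: overlap_def evolve_prefix_ones norm_mult)
    with c_ge[OF \<open>0 < m\<close>] have "overlap e0 UA (prefix_ones k) psi ns i \<le> c"
      by simp
    then show "\<exists>i. overlap e0 UA (prefix_ones k) psi ns i \<le> c" ..
  qed
  with \<open>c < 1\<close> show ?thesis
    by linarith
qed

text \<open>The argument works for every \<open>lam \<ge> 0\<close>.\<close>

theorem theorem6:
  fixes lam :: real
  assumes "0 \<le> lam" and "lam < 1"
  shows "\<not> (QBA_D_eq1 \<subseteq> QBA_D_gt lam)"
proof
  let ?L = "lang_eq1 2 e0 {0, 1, 2} UA FA"
  assume "QBA_D_eq1 \<subseteq> QBA_D_gt lam"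
  moreover have "?L \<in> QBA_D_eq1"
    unfolding QBA_D_eq1_def using quantum_automaton_A by blast
  ultimately obtain d s0 Sig U F where B: "quantum_automaton d s0 Sig U F"
    and L: "?L = lang_gt lam d s0 Sig U F"
    unfolding QBA_D_gt_def by blast
  have "(\<lambda>_. 0) \<in> ?L" "rot_back \<in> ?L"
    using fD_A_zeros fD_A_rot_back by (auto simp: lang_eq1_def omega_words_def rot_back_def)
  then have zeros: "(\<lambda>_. 0) \<in> omega_words Sig" "lam < fD d s0 U F (\<lambda>_. 0)"
    and "rot_back 0 \<in> Sig"
    unfolding L lang_gt_def omega_words_def by auto
  then have one: "1 \<in> Sig"
    by (simp add: rot_back_def)
  obtain k where "0 < k" and "lam < fD d s0 U F (prefix_ones k)"
    using fD_prefix_power_gt[OF B zeros(1) one assms(1) zeros(2)] by (auto simp: prefix_ones_def)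
  moreover have "prefix_ones k \<in> omega_words Sig"
    using zeros(1) one by (simp add: omega_words_def prefix_ones_def)
  ultimately have "prefix_ones k \<in> ?L"
    unfolding L lang_gt_def by simp
  then show False
    using fD_A_prefix_ones_less_1[OF \<open>0 < k\<close>] by (simp add: lang_eq1_def)
qed

end
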